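(* Let $\beta \in \mathbb{C}$. Then for every $\alpha \in \mathbb{C}$, \[ p_\beta(\beta\alpha) = p_\beta(\beta\alpha - 1) + p_\beta(\alpha) \] (as an identity in $\mathbb{Z}_{\geq 0}\cup\{\infty\}$).
   Context: For $\beta, \alpha \in \mathbb{C}$, $p_\beta(\alpha) \in \mathbb{Z}_{\geq 0}\cup\{\infty\}$ is the number of polynomials $f \in \mathbb{Z}_{\geq 0}[x]$ (non-negative integer coefficients) with $f(\beta) = \alpha$. *)

theory Defs
  imports Complex_Main "HOL-Computational_Algebra.Polynomial" "HOL-Library.Extended_Nat"
begin

text \<open>Polynomials with non-negative integer coefficients are modelled as nat poly;
  evaluation at a complex number goes through the coefficient map of_nat.\<close>

definition rep_set :: "complex \<Rightarrow> complex \<Rightarrow> nat poly set" where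
  "rep_set \<beta> \<alpha> = {f :: nat poly. poly (map_poly of_nat f) \<beta> = \<alpha>}"

definition p :: "complex \<Rightarrow> complex \<Rightarrow> enat" where
  "p \<beta> \<alpha> = (if finite (rep_set \<beta> \<alpha>) then enat (card (rep_set \<beta> \<alpha>)) else \<infinity>)"

end

theory Submission
  imports Defs
begin

text \<open>Split the representations \<open>f\<close> of \<open>\<beta>\<alpha>\<close> by their constant coefficient. If it is positive,
  \<open>f - 1\<close> represents \<open>\<beta>\<alpha> - 1\<close>; if it is zero, \<open>f = x g\<close> and, as \<open>\<beta> \<noteq> 0\<close>, \<open>g\<close> represents \<open>\<alpha>\<close>.
  Both correspondences are bijections, so the counts add up, also when some of them are infinite.\<close>

definition ecard :: "'a set \<Rightarrow> enat" where
  "ecard A = (if finite A then enat (card A) else \<infinity>)"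

lemma ecard_Un_disjoint: "A \<inter> B = {} \<Longrightarrow> ecard (A \<union> B) = ecard A + ecard B"
  by (auto simp: ecard_def card_Un_disjoint)

lemma ecard_partition: "ecard A = ecard {x \<in> A. P x} + ecard {x \<in> A. \<not> P x}"
proof -
  have "ecard A = ecard ({x \<in> A. P x} \<union> {x \<in> A. \<not> P x})"
    by (rule arg_cong[where f = ecard]) blast
  also have "\<dots> = ecard {x \<in> A. P x} + ecard {x \<in> A. \<not> P x}"
    by (rule ecard_Un_disjoint) blast
  finally show ?thesis .
qed

lemma ecard_image: "inj_on f A \<Longrightarrow> ecard (f ` A) = ecard A"
  by (simp add: ecard_def card_image finite_image_iff)

lemma p_eq_ecard_rep_set: "p \<beta> \<alpha> = ecard (rep_set \<beta> \<alpha>)"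
  by (simp add: p_def ecard_def)

lemma poly_map_of_nat_pCons:
  "poly (map_poly of_nat (pCons a f)) x = of_nat a + x * poly (map_poly of_nat f) x"
  by (simp add: map_poly_pCons)

lemma poly_map_of_nat_plus_1:
  "poly (map_poly of_nat (f + 1)) x = poly (map_poly of_nat f) x + (1 :: 'a :: comm_semiring_1)"
  by (cases f) (simp add: one_pCons poly_map_of_nat_pCons ac_simps)

lemma nat_poly_eq_plus_1:
  fixes f :: "nat poly"
  assumes "coeff f 0 \<noteq> 0"
  obtains g where "f = g + 1"
proof (cases f)
  case (pCons a h)
  with assms obtain b where "a = Suc b" by (cases a) auto
  with pCons have "f = pCons b h + 1" by (simp add: one_pCons)
  then show ?thesis by (rule that)
qed

lemma rep_set_constant_nonzero:
  "{f \<in> rep_set \<beta> \<gamma>. coeff f 0 \<noteq> 0} = (\<lambda>g. g + 1) ` rep_set \<beta> (\<gamma> - 1)"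
proof (intro equalityI subsetI)
  fix f assume "f \<in> {f \<in> rep_set \<beta> \<gamma>. coeff f 0 \<noteq> 0}"
  then have f: "f \<in> rep_set \<beta> \<gamma>" and "coeff f 0 \<noteq> 0" by auto
  from \<open>coeff f 0 \<noteq> 0\<close> obtain g where "f = g + 1" by (rule nat_poly_eq_plus_1)
  moreover from f have "g \<in> rep_set \<beta> (\<gamma> - 1)"
    by (auto simp: \<open>f = g + 1\<close> rep_set_def poly_map_of_nat_plus_1)
  ultimately show "f \<in> (\<lambda>g. g + 1) ` rep_set \<beta> (\<gamma> - 1)" by blast
qed (auto simp: rep_set_def poly_map_of_nat_plus_1)

lemma rep_set_constant_zero:
  assumes "\<beta> \<noteq> 0"
  shows "{f \<in> rep_set \<beta> (\<beta> * \<alpha>). coeff f 0 = 0} = pCons 0 ` rep_set \<beta> \<alpha>"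
proof (intro equalityI subsetI)
  fix f assume f: "f \<in> {f \<in> rep_set \<beta> (\<beta> * \<alpha>). coeff f 0 = 0}"
  obtain a g where "f = pCons a g" by (cases f)
  with f assms show "f \<in> pCons 0 ` rep_set \<beta> \<alpha>"
    by (auto simp: rep_set_def poly_map_of_nat_pCons)
qed (auto simp: rep_set_def poly_map_of_nat_pCons)

theorem proposition4:
  fixes \<beta> \<alpha> :: complex
  assumes "\<beta> \<noteq> 0"
  shows "p \<beta> (\<beta> * \<alpha>) = p \<beta> (\<beta> * \<alpha> - 1) + p \<beta> \<alpha>"
proof -
  have "p \<beta> (\<beta> * \<alpha>)
      = ecard {f \<in> rep_set \<beta> (\<beta> * \<alpha>). coeff f 0 \<noteq> 0} + ecard {f \<in> rep_set \<beta> (\<beta> * \<alpha>). coeff f 0 = 0}"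
    unfolding p_eq_ecard_rep_set by (rule ecard_partition[where P = "\<lambda>f. coeff f 0 \<noteq> 0", simplified])
  also have "\<dots> = ecard ((\<lambda>g. g + 1) ` rep_set \<beta> (\<beta> * \<alpha> - 1)) + ecard (pCons 0 ` rep_set \<beta> \<alpha>)"
    by (simp only: rep_set_constant_nonzero rep_set_constant_zero[OF assms])
  also have "\<dots> = p \<beta> (\<beta> * \<alpha> - 1) + p \<beta> \<alpha>"
    by (simp add: ecard_image inj_on_def p_eq_ecard_rep_set)
  finally show ?thesis .
qed

end
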